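(* Let $B$ be a Banach $A$-bimodule, where $A$ has a bounded approximate identity, and suppose $B^*A=B^*$. (1) If every element of $A$ has the $Rw^*w$-property with respect to $A$, then $Z_{B^{**}}(A^{**})=A^{**}$. (2) If every element of $A$ has the $Rw^*w$-property with respect to $B$, then $Z_{A^{**}}(B^{**})=B^{**}$.
   Context: $A$ is a Banach algebra, $B$ a Banach $A$-bimodule with actions $\pi_\ell(a,b)=ab$, $\pi_r(b,a)=ba$. For a bounded bilinear $m:X\times Y\to Z$: $m^*:Z^*\times X\to Y^*$, $\langle m^*(z',x),y\rangle=\langle z',m(x,y)\rangle$; $m^{**}:Y^{**}\times Z^*\to X^*$, $\langle m^{**}(y'',z'),x\rangle=\langle y'',m^*(z',x)\rangle$; $m^{***}:X^{**}\times Y^{**}\to Z^{**}$, $\langle m^{***}(x'',y''),z'\rangle=\langle x'',m^{**}(y'',z')\rangle$. For $b'\in B^*$, $a\in A$: $\langle b'a,b\rangle=\langle b',ab\rangle$; $B^*A=\{b'a:b'\in B^*,a\in A\}$. An element $a\in A$ has the $Rw^*w$-property with respect to $B$ if for every net $(b'_\alpha)\subseteq B^*$, $b'_\alpha a\to0$ weak$^*$ implies $b'_\alpha a\to0$ weakly (in $\sigma(B^*,B^{**})$); "with respect to $A$" means $B=A$ as a bimodule over itself (so $\langle a'a,c\rangle=\langle a',ac\rangle$ for $a'\in A^*$). $Z_{B^{**}}(A^{**})=\{a''\in A^{**}:b''\mapsto\pi_\ell^{***}(a'',b'')$ weak$^*$-to-weak$^*$ continuous$\}$; $Z_{A^{**}}(B^{**})=\{b''\in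 B^{**}:a''\mapsto\pi_r^{***}(b'',a'')$ weak$^*$-to-weak$^*$ continuous$\}$. *)

theory Defs
  imports "HOL-Analysis.Analysis"
begin

text \<open>Duals are taken as spaces of bounded real-linear functionals, \<open>'x \<Rightarrow>\<^sub>L real\<close>.\<close>

text \<open>Weak-star topology on the dual \<open>X\<^sup>*\<close>: \<open>\<sigma>(X\<^sup>*, X)\<close>, the initial topology
  of the evaluations \<open>f \<mapsto> f x\<close>, \<open>x \<in> X\<close>.\<close>
definition weak_star_topology :: "('x::real_normed_vector \<Rightarrow>\<^sub>L real) topology" where
  "weak_star_topology =
     pullback_topology UNIV (\<lambda>f x. blinfun_apply f x) (product_topology (\<lambda>_. euclideanreal) UNIV)"

text \<open>Weak topology on a dual space \<open>X\<^sup>*\<close>: \<open>\<sigma>(X\<^sup>*, X\<^sup>*\<^sup>*)\<close>, the initial topology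
  of all \<open>f \<mapsto> \<phi> f\<close>, \<open>\<phi> \<in> X\<^sup>*\<^sup>*\<close>.\<close>
definition weak_topology_dual :: "('x::real_normed_vector \<Rightarrow>\<^sub>L real) topology" where
  "weak_topology_dual =
     pullback_topology UNIV (\<lambda>f (\<phi>::('x \<Rightarrow>\<^sub>L real) \<Rightarrow>\<^sub>L real). blinfun_apply \<phi> f)
       (product_topology (\<lambda>_. euclideanreal) UNIV)"

definition adj1 :: "('x::real_normed_vector \<Rightarrow> 'y::real_normed_vector \<Rightarrow> 'z::real_normed_vector)
    \<Rightarrow> ('z \<Rightarrow>\<^sub>L real) \<Rightarrow> 'x \<Rightarrow> ('y \<Rightarrow>\<^sub>L real)" where
  "adj1 m z' x = Blinfun (\<lambda>y. blinfun_apply z' (m x y))"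

definition adj2 :: "('x::real_normed_vector \<Rightarrow> 'y::real_normed_vector \<Rightarrow> 'z::real_normed_vector)
    \<Rightarrow> (('y \<Rightarrow>\<^sub>L real) \<Rightarrow>\<^sub>L real) \<Rightarrow> ('z \<Rightarrow>\<^sub>L real) \<Rightarrow> ('x \<Rightarrow>\<^sub>L real)" where
  "adj2 m y'' z' = Blinfun (\<lambda>x. blinfun_apply y'' (adj1 m z' x))"

definition adj3 :: "('x::real_normed_vector \<Rightarrow> 'y::real_normed_vector \<Rightarrow> 'z::real_normed_vector)
    \<Rightarrow> (('x \<Rightarrow>\<^sub>L real) \<Rightarrow>\<^sub>L real) \<Rightarrow> (('y \<Rightarrow>\<^sub>L real) \<Rightarrow>\<^sub>L real) \<Rightarrow> (('z \<Rightarrow>\<^sub>L real) \<Rightarrow>\<^sub>L real)" where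
  "adj3 m x'' y'' = Blinfun (\<lambda>z'. blinfun_apply x'' (adj2 m y'' z'))"

text \<open>A Banach algebra is a type of class \<open>{real_normed_algebra, banach}\<close> (associative,
  not necessarily unital).\<close>
definition banach_bimodule ::
  "('a::real_normed_algebra \<Rightarrow> 'b::banach \<Rightarrow> 'b) \<Rightarrow> ('b \<Rightarrow> 'a \<Rightarrow> 'b) \<Rightarrow> bool" where
  "banach_bimodule lm rm \<longleftrightarrow>
     bounded_bilinear lm \<and> bounded_bilinear rm \<and>
     (\<forall>a c b. lm (a * c) b = lm a (lm c b)) \<and>
     (\<forall>b a c. rm b (a * c) = rm (rm b a) c) \<and>
     (\<forall>a b c. rm (lm a b) c = lm a (rm b c))"

text \<open>Bounded approximate identity, as a bounded net (expressed as a proper filter on \<open>A\<close>,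
  equivalently: the eventually-filter of a net \<open>(e\<^sub>\<alpha>)\<close>) with \<open>e\<^sub>\<alpha> a \<rightarrow> a\<close>, \<open>a e\<^sub>\<alpha> \<rightarrow> a\<close>.\<close>
definition has_bounded_approx_identity :: "'a::real_normed_algebra itself \<Rightarrow> bool" where
  "has_bounded_approx_identity _ \<longleftrightarrow>
     (\<exists>(F::'a filter) K. F \<noteq> bot \<and> (\<forall>\<^sub>F e in F. norm e \<le> K) \<and>
        (\<forall>a. ((\<lambda>e. e * a) \<longlongrightarrow> a) F \<and> ((\<lambda>e. a * e) \<longlongrightarrow> a) F))"

text \<open>The module dual action \<open>\<langle>b'a, b\<rangle> = \<langle>b', ab\<rangle>\<close>, i.e. \<open>b'a = lm\<^sup>*(b',a)\<close>.\<close>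
abbreviation dual_act :: "('a \<Rightarrow> 'b \<Rightarrow> 'b) \<Rightarrow> ('b::real_normed_vector \<Rightarrow>\<^sub>L real) \<Rightarrow> 'a::real_normed_vector \<Rightarrow> ('b \<Rightarrow>\<^sub>L real)" where
  "dual_act lm b' a \<equiv> adj1 lm b' a"

text \<open>Nets are represented by filters on \<open>B\<^sup>*\<close> (the image filter of a net).\<close>
definition Rwsw_property :: "('a::real_normed_vector \<Rightarrow> 'b::real_normed_vector \<Rightarrow> 'b) \<Rightarrow> 'a \<Rightarrow> bool" where
  "Rwsw_property lm a \<longleftrightarrow>
     (\<forall>F::('b \<Rightarrow>\<^sub>L real) filter.
        limitin weak_star_topology (\<lambda>b'. dual_act lm b' a) 0 F \<longrightarrow>
        limitin weak_topology_dual (\<lambda>b'. dual_act lm b' a) 0 F)"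

definition Z_left :: "('a::real_normed_vector \<Rightarrow> 'b::real_normed_vector \<Rightarrow> 'b)
    \<Rightarrow> (('a \<Rightarrow>\<^sub>L real) \<Rightarrow>\<^sub>L real) set" where
  "Z_left lm = {a''. continuous_map weak_star_topology weak_star_topology (\<lambda>b''. adj3 lm a'' b'')}"

definition Z_right :: "('b::real_normed_vector \<Rightarrow> 'a::real_normed_vector \<Rightarrow> 'b)
    \<Rightarrow> (('b \<Rightarrow>\<^sub>L real) \<Rightarrow>\<^sub>L real) set" where
  "Z_right rm = {b''. continuous_map weak_star_topology weak_star_topology (\<lambda>a''. adj3 rm b'' a'')}"

end

theory Submission imports Defs begin

text \<open>
  Both parts of the theorem are instances of one statement about a bounded bilinear map
  \<open>n : X \<times> Y \<rightarrow> Z\<close> together with actions \<open>m : A \<times> X \<rightarrow> X\<close> and \<open>k : A \<times> Z \<rightarrow> Z\<close> satisfying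
  \<open>k(c, n(x,y)) = n(m(c,x), y)\<close>: if every functional on \<open>Z\<close> factors as \<open>b'c\<close> (through \<open>k\<close>)
  and every \<open>c \<in> A\<close> has the \<open>Rw\<^sup>*w\<close>-property for \<open>m\<close>, then \<open>y'' \<mapsto> n\<^sup>*\<^sup>*\<^sup>*(x'',y'')\<close> is
  weak-star continuous for every \<open>x''\<close>.  The reason is the transposition identity
  \<open>n\<^sup>*\<^sup>*(y'', b'c) = n\<^sup>*\<^sup>*(y'', b')\<cdot>c\<close>: as \<open>y''\<close> moves weak-star, so does \<open>n\<^sup>*\<^sup>*(y'', b')\<close> and
  hence its product with \<open>c\<close>; the \<open>Rw\<^sup>*w\<close>-property upgrades this to weak convergence, which
  is exactly what pairing with \<open>x''\<close> requires.
  Part (1) is the instance \<open>n = \<pi>\<^sub>\<ell>\<close>, \<open>m\<close> = multiplication of \<open>A\<close>, \<open>k = \<pi>\<^sub>\<ell>\<close>;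
  part (2) is \<open>n = \<pi>\<^sub>r\<close>, \<open>m = k = \<pi>\<^sub>\<ell>\<close>.
\<close>

lemma adj1_apply:
  assumes "bounded_bilinear m"
  shows "blinfun_apply (adj1 m z' x) y = blinfun_apply z' (m x y)"
proof -
  have "bounded_linear (\<lambda>y. blinfun_apply z' (m x y))"
    by (rule bounded_linear_compose[OF blinfun.bounded_linear_right
          bounded_bilinear.bounded_linear_right[OF assms]])
  then show ?thesis unfolding adj1_def by (simp add: bounded_linear_Blinfun_apply)
qed

text \<open>The first transpose of a bounded bilinear map is again bounded bilinear; this makes
  the iterated transposes well behaved and lets us subtract inside \<open>m\<^sup>*\<close>.\<close>
lemma adj1_bounded_bilinear:
  assumes bb: "bounded_bilinear m"
  shows "bounded_bilinear (adj1 m)"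
proof (rule bounded_bilinear.intro)
  fix a a' b
  show "adj1 m (a + a') b = adj1 m a b + adj1 m a' b"
    by (rule blinfun_eqI) (simp add: adj1_apply[OF bb] blinfun.add_left)
next
  fix a b b'
  show "adj1 m a (b + b') = adj1 m a b + adj1 m a b'"
    by (rule blinfun_eqI)
      (simp add: adj1_apply[OF bb] bounded_bilinear.add_left[OF bb] blinfun.add_right blinfun.add_left)
next
  fix r a b
  show "adj1 m (r *\<^sub>R a) b = r *\<^sub>R adj1 m a b"
    by (rule blinfun_eqI) (simp add: adj1_apply[OF bb] blinfun.scaleR_left)
next
  fix r a b
  show "adj1 m a (r *\<^sub>R b) = r *\<^sub>R adj1 m a b"
    by (rule blinfun_eqI)
      (simp add: adj1_apply[OF bb] bounded_bilinear.scaleR_left[OF bb] blinfun.scaleR_right blinfun.scaleR_left)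
next
  obtain K where K: "K > 0" "\<And>a b. norm (m a b) \<le> norm a * norm b * K"
    using bounded_bilinear.pos_bounded[OF bb] by blast
  have "norm (adj1 m a b) \<le> norm a * norm b * K" for a b
  proof (rule norm_blinfun_bound)
    show "0 \<le> norm a * norm b * K" using K by simp
    fix y
    have "norm (blinfun_apply (adj1 m a b) y) \<le> norm a * norm (m b y)"
      by (metis adj1_apply[OF bb] norm_blinfun)
    also have "\<dots> \<le> norm a * (norm b * norm y * K)"
      by (rule mult_left_mono[OF K(2)]) simp
    finally show "norm (blinfun_apply (adj1 m a b) y) \<le> norm a * norm b * K * norm y"
      by (simp add: ac_simps)
  qed
  then show "\<exists>K. \<forall>a b. norm (adj1 m a b) \<le> norm a * norm b * K" by blast
qed

lemma adj2_apply:
  assumes "bounded_bilinear m"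
  shows "blinfun_apply (adj2 m y'' z') x = blinfun_apply y'' (adj1 m z' x)"
proof -
  have "adj2 m y'' z' = adj1 (adj1 m) y'' z'" by (simp add: adj2_def adj1_def)
  then show ?thesis by (simp add: adj1_apply adj1_bounded_bilinear[OF assms])
qed

lemma adj3_apply:
  assumes "bounded_bilinear m"
  shows "blinfun_apply (adj3 m x'' y'') z' = blinfun_apply x'' (adj2 m y'' z')"
proof -
  have "adj2 m = adj1 (adj1 m)" by (intro ext) (simp add: adj2_def adj1_def)
  then have "bounded_bilinear (adj2 m)"
    by (simp add: adj1_bounded_bilinear[OF adj1_bounded_bilinear[OF assms]])
  moreover have "adj3 m x'' y'' = adj1 (adj2 m) x'' y''" by (simp add: adj3_def adj1_def)
  ultimately show ?thesis by (simp add: adj1_apply)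
qed

lemma adj2_dual_act:
  assumes n: "bounded_bilinear n" and m: "bounded_bilinear m" and k: "bounded_bilinear k"
    and compat: "\<And>c x y. k c (n x y) = n (m c x) y"
  shows "adj2 n y'' (adj1 k b' c) = adj1 m (adj2 n y'' b') c"
proof -
  have "adj1 n (adj1 k b' c) x = adj1 n b' (m c x)" for x
    by (rule blinfun_eqI) (simp add: adj1_apply[OF n] adj1_apply[OF k] compat)
  then show ?thesis
    by (intro blinfun_eqI) (simp add: adj2_apply[OF n] adj1_apply[OF m])
qed

lemma limitin_pullback_product:
  "limitin (pullback_topology UNIV f (product_topology (\<lambda>_. euclideanreal) UNIV)) g l F
    \<longleftrightarrow> (\<forall>i. ((\<lambda>p. f (g p) i) \<longlongrightarrow> f l i) F)"
proof -
  have "limitin (pullback_topology UNIV f T) g l F \<longleftrightarrow> limitin T (f \<circ> g) (f l) F" for T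
    unfolding limitin_def openin_pullback_topology topspace_pullback_topology by auto
  then show ?thesis by (simp add: limitin_componentwise)
qed

lemma limitin_weak_star:
  "limitin weak_star_topology g l F \<longleftrightarrow>
     (\<forall>x. ((\<lambda>p. blinfun_apply (g p) x) \<longlongrightarrow> blinfun_apply l x) F)"
  unfolding weak_star_topology_def limitin_pullback_product by simp

lemma limitin_weak_dual:
  "limitin weak_topology_dual g l F \<longleftrightarrow>
     (\<forall>\<phi>::_ \<Rightarrow>\<^sub>L real. ((\<lambda>p. blinfun_apply \<phi> (g p)) \<longlongrightarrow> blinfun_apply \<phi> l) F)"
  unfolding weak_topology_dual_def limitin_pullback_product by auto

lemma topspace_weak_star: "topspace weak_star_topology = UNIV"
  unfolding weak_star_topology_def topspace_pullback_topology by simp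

lemma limitin_weak_star_atin: "limitin weak_star_topology (\<lambda>p. p) q (atin weak_star_topology q)"
  using continuous_map_id[of weak_star_topology]
  unfolding continuous_map_atin topspace_weak_star id_def by blast

lemma adj2_weak_star_continuous:
  assumes "bounded_bilinear n"
  shows "limitin weak_star_topology (\<lambda>p. adj2 n p z') (adj2 n q z') (atin weak_star_topology q)"
  using limitin_weak_star_atin[of q] unfolding limitin_weak_star by (simp add: adj2_apply[OF assms])

lemma dual_act_weak_star_continuous:
  assumes "bounded_bilinear m" and "limitin weak_star_topology g l F"
  shows "limitin weak_star_topology (\<lambda>p. adj1 m (g p) c) (adj1 m l c) F"
  using assms(2) unfolding limitin_weak_star by (simp add: adj1_apply[OF assms(1)])

text \<open>The \<open>Rw\<^sup>*w\<close>-property, stated for nets tending to \<open>0\<close>, applies to nets \<open>g\<^sub>\<alpha> c\<close> with an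
  arbitrary limit \<open>l c\<close>: apply it to the translated net \<open>g\<^sub>\<alpha> - l\<close>.\<close>
lemma Rwsw_weak_limit:
  assumes m: "bounded_bilinear m" and Rwsw: "Rwsw_property m c"
    and lim: "limitin weak_star_topology (\<lambda>p. adj1 m (g p) c) (adj1 m l c) F"
  shows "limitin weak_topology_dual (\<lambda>p. adj1 m (g p) c) (adj1 m l c) F"
proof -
  let ?F = "filtermap (\<lambda>p. g p - l) F"
  have diff: "adj1 m (g p - l) c = adj1 m (g p) c - adj1 m l c" for p
    by (simp add: bounded_bilinear.diff_left[OF adj1_bounded_bilinear[OF m]])
  have "limitin weak_star_topology (\<lambda>b'. dual_act m b' c) 0 ?F"
    using lim unfolding limitin_weak_star filterlim_filtermap
    by (simp add: diff blinfun.diff_left LIM_zero_iff)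
  with Rwsw have "limitin weak_topology_dual (\<lambda>b'. dual_act m b' c) 0 ?F"
    unfolding Rwsw_property_def by blast
  then show ?thesis
    unfolding limitin_weak_dual filterlim_filtermap
    by (simp add: diff blinfun.diff_right LIM_zero_iff)
qed

text \<open>Both centres of the theorem are of this form.\<close>
definition topological_centre ::
    "('x::real_normed_vector \<Rightarrow> 'y::real_normed_vector \<Rightarrow> 'z::real_normed_vector)
     \<Rightarrow> (('x \<Rightarrow>\<^sub>L real) \<Rightarrow>\<^sub>L real) set" where
  "topological_centre n =
     {x''. continuous_map weak_star_topology weak_star_topology (adj3 n x'')}"

lemma Z_left_eq: "Z_left lm = topological_centre lm"
  unfolding Z_left_def topological_centre_def by simp

lemma Z_right_eq: "Z_right rm = topological_centre rm"
  unfolding Z_right_def topological_centre_def by simp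

lemma topological_centre_UNIV:
  assumes n: "bounded_bilinear n" and m: "bounded_bilinear m" and k: "bounded_bilinear k"
    and compat: "\<And>c x y. k c (n x y) = n (m c x) y"
    and factor: "\<And>z'. \<exists>b' c. z' = adj1 k b' c"
    and Rwsw: "\<And>c. Rwsw_property m c"
  shows "topological_centre n = UNIV"
proof -
  have "limitin weak_star_topology (adj3 n x'') (adj3 n x'' q) (atin weak_star_topology q)"
    for x'' q
    unfolding limitin_weak_star
  proof
    fix z'
    obtain b' c where z': "z' = adj1 k b' c" using factor by blast
    have "limitin weak_topology_dual (\<lambda>p. adj1 m (adj2 n p b') c) (adj1 m (adj2 n q b') c)
            (atin weak_star_topology q)"
      by (intro Rwsw_weak_limit[OF m Rwsw] dual_act_weak_star_continuous[OF m]
            adj2_weak_star_continuous[OF n])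
    then show "((\<lambda>p. blinfun_apply (adj3 n x'' p) z') \<longlongrightarrow> blinfun_apply (adj3 n x'' q) z')
                 (atin weak_star_topology q)"
      unfolding limitin_weak_dual z'
      by (simp add: adj3_apply[OF n] adj2_dual_act[OF n m k compat])
  qed
  then show ?thesis
    unfolding topological_centre_def continuous_map_atin topspace_weak_star by blast
qed

theorem mainTheorem7:
  fixes lm :: "'a::{real_normed_algebra, banach} \<Rightarrow> 'b::banach \<Rightarrow> 'b"
    and rm :: "'b \<Rightarrow> 'a \<Rightarrow> 'b"
  assumes bimod: "banach_bimodule lm rm"
    and bai: "has_bounded_approx_identity TYPE('a)"
    and fact: "{dual_act lm b' a | b' a. True} = UNIV"
  shows "((\<forall>a::'a. Rwsw_property ((*) :: 'a \<Rightarrow> 'a \<Rightarrow> 'a) a) \<longrightarrow> Z_left lm = UNIV)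
       \<and> ((\<forall>a::'a. Rwsw_property lm a) \<longrightarrow> Z_right rm = UNIV)"
proof -
  have lm: "bounded_bilinear lm" and rm: "bounded_bilinear rm"
    and assoc: "\<And>a c b. lm a (lm c b) = lm (a * c) b"
    and mixed: "\<And>a b c. lm a (rm b c) = rm (lm a b) c"
    using bimod unfolding banach_bimodule_def by auto
  have factor: "\<And>z'. \<exists>b' a. z' = adj1 lm b' a" using fact by blast
  have "Z_left lm = UNIV" if "\<forall>a::'a. Rwsw_property (*) a"
    unfolding Z_left_eq
    using topological_centre_UNIV[OF lm bounded_bilinear_mult lm assoc factor] that by blast
  moreover have "Z_right rm = UNIV" if "\<forall>a::'a. Rwsw_property lm a"
    unfolding Z_right_eq
    using topological_centre_UNIV[OF rm lm lm mixed factor] that by blast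
  ultimately show ?thesis by blast
qed

end
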